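(* Let $\mathsf{K}$ be a free simplicial $\mathbb{Z}_2$-complex and let $\lambda_1,\ldots,\lambda_m$ be Fan labelings of $\mathsf{K}$. For any choice of non-negative integers $d_1,\ldots,d_m$ with $d_1+\cdots+d_m=\operatorname{ind}(\mathsf{K})$, there exists a simplex $\sigma$ of $\mathsf{K}$ which, for each $i\in[m]$, has a $d_i$-dimensional face that is alternating with respect to $\lambda_i$.
   Context: A free simplicial $\mathbb{Z}_2$-complex is a simplicial complex with a free simplicial $\mathbb{Z}_2$-action (an involution without fixed points on its geometric realization). A Fan labeling is a labeling of its vertices by non-zero integers such that (i) no two adjacent vertices have labels summing to zero, and (ii) the two vertices of any orbit of the action have labels summing to zero. A simplex is alternating with respect to a labeling if the signs of the labels alternate when its vertices are ordered by increasing absolute value of their labels (in particular the labels have distinct absolute values). The $\mathbb{Z}_2$-index $\operatorname{ind}(\mathsf{K})$ is the minimal $d$ such that there exists a continuous map from (the geometric realization of) $\mathsf{K}$ to the sphere $\mathcal{S}^d$ commuting with the $\mathbb{Z}_2$-actions, the action on $\mathcal{S}^d$ being the antipodal map. *)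

theory Defs
  imports "HOL-Analysis.Analysis"
begin

definition simplicial_complex :: "'v set set \<Rightarrow> bool" where
  "simplicial_complex K \<longleftrightarrow> finite K \<and> (\<forall>\<sigma>\<in>K. \<sigma> \<noteq> {} \<and> finite \<sigma>) \<and>
     (\<forall>\<sigma>\<in>K. \<forall>\<tau>. \<tau> \<subseteq> \<sigma> \<and> \<tau> \<noteq> {} \<longrightarrow> \<tau> \<in> K)"

definition vertices :: "'v set set \<Rightarrow> 'v set" where
  "vertices K = \<Union>K"

text \<open>Geometric realization: points are barycentric coordinate functions whose support is a
  simplex; it carries the subspace topology of the product topology on 'v \<Rightarrow> real.\<close>
definition geom_real :: "'v set set \<Rightarrow> ('v \<Rightarrow> real) set" where
  "geom_real K = {f. (\<forall>v. 0 \<le> f v) \<and> {v. f v \<noteq> 0} \<in> K \<and> sum f {v. f v \<noteq> 0} = 1}"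

definition free_Z2_complex :: "'v set set \<Rightarrow> ('v \<Rightarrow> 'v) \<Rightarrow> bool" where
  "free_Z2_complex K \<nu> \<longleftrightarrow> simplicial_complex K \<and>
     (\<forall>v\<in>vertices K. \<nu> v \<in> vertices K \<and> \<nu> (\<nu> v) = v) \<and>
     (\<forall>\<sigma>\<in>K. \<nu> ` \<sigma> \<in> K) \<and>
     (\<forall>x\<in>geom_real K. x \<circ> \<nu> \<noteq> x)"

text \<open>The sphere S^d (d \<ge> -1 an integer), embedded in nat \<Rightarrow> real (coordinates 0..d);
  S^(-1) is empty.\<close>
definition sphere_d :: "int \<Rightarrow> (nat \<Rightarrow> real) set" where
  "sphere_d d = {x. (\<forall>i. d < int i \<longrightarrow> x i = 0) \<and> (\<Sum>i\<in>{i. int i \<le> d}. (x i)\<^sup>2) = 1}"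

definition Z2_index :: "'v set set \<Rightarrow> ('v \<Rightarrow> 'v) \<Rightarrow> int" where
  "Z2_index K \<nu> = (LEAST d::int. -1 \<le> d \<and> (\<exists>g :: ('v \<Rightarrow> real) \<Rightarrow> (nat \<Rightarrow> real).
      continuous_on (geom_real K) g \<and> g ` geom_real K \<subseteq> sphere_d d \<and>
      (\<forall>x\<in>geom_real K. g (x \<circ> \<nu>) = - g x)))"

definition fan_labeling :: "'v set set \<Rightarrow> ('v \<Rightarrow> 'v) \<Rightarrow> ('v \<Rightarrow> int) \<Rightarrow> bool" where
  "fan_labeling K \<nu> lab \<longleftrightarrow>
     (\<forall>v\<in>vertices K. lab v \<noteq> 0) \<and>
     (\<forall>u v. {u, v} \<in> K \<and> u \<noteq> v \<longrightarrow> lab u + lab v \<noteq> 0) \<and>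
     (\<forall>v\<in>vertices K. lab v + lab (\<nu> v) = 0)"

definition alternating :: "('v \<Rightarrow> int) \<Rightarrow> 'v set \<Rightarrow> bool" where
  "alternating lab \<tau> \<longleftrightarrow> inj_on (\<lambda>v. \<bar>lab v\<bar>) \<tau> \<and>
     (\<forall>u\<in>\<tau>. \<forall>w\<in>\<tau>. \<bar>lab u\<bar> < \<bar>lab w\<bar> \<and>
        \<not> (\<exists>x\<in>\<tau>. \<bar>lab u\<bar> < \<bar>lab x\<bar> \<and> \<bar>lab x\<bar> < \<bar>lab w\<bar>)
        \<longrightarrow> sgn (lab u) \<noteq> sgn (lab w))"

end

theory Submission
  imports Defs "HOL-Computational_Algebra.Polynomial"
begin

text \<open>Suppose no simplex works. Put \<open>k = d\<^sub>1 + \<dots> + d\<^sub>m = ind K\<close> and consider the \<open>k\<close>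
  signed moments \<open>x \<mapsto> \<Sum>\<^sub>v x\<^sub>v sgn(\<lambda>\<^sub>i v) \<bar>\<lambda>\<^sub>i v\<bar>\<^sup>p\<close> for \<open>p < d\<^sub>i\<close>. They are continuous and odd
  with respect to the involution. At a point \<open>x\<close> with support \<open>\<sigma>\<close>, some labeling \<open>\<lambda>\<^sub>i\<close> has
  no alternating face of \<open>\<sigma>\<close> with \<open>d\<^sub>i + 1\<close> vertices; then the signs of \<open>\<lambda>\<^sub>i\<close> on \<open>\<sigma>\<close>, read in
  the order of increasing absolute value, change fewer than \<open>d\<^sub>i\<close> times, so a polynomial of
  degree less than \<open>d\<^sub>i\<close> has sign \<open>sgn(\<lambda>\<^sub>i v)\<close> at \<open>\<bar>\<lambda>\<^sub>i v\<bar>\<close> for all \<open>v \<in> \<sigma>\<close>. Pairing with \<open>x\<close> shows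
  that some moment is non-zero at \<open>x\<close>. Normalising the moments thus gives an equivariant map
  into \<open>S\<^sup>k\<^sup>-\<^sup>1\<close>, contradicting \<open>ind K = k\<close>.\<close>

lemma finite_obtain_max:
  fixes f :: "'a \<Rightarrow> 'b::linorder"
  assumes "finite S" "S \<noteq> {}"
  obtains u where "u \<in> S" "\<forall>x\<in>S. f x \<le> f u"
proof -
  have "Max (f ` S) \<in> f ` S" using assms by (intro Max_in) auto
  then obtain u where "u \<in> S" "f u = Max (f ` S)" by force
  then show ?thesis using assms(1) that by simp
qed

subsection \<open>Alternating sets\<close>

lemma alternating_Diff_max:
  assumes "alternating lab \<tau>" "\<forall>x\<in>\<tau>. \<bar>lab x\<bar> \<le> \<bar>lab u\<bar>"
  shows "alternating lab (\<tau> - {u})"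
  unfolding alternating_def
proof (intro conjI ballI impI)
  show "inj_on (\<lambda>v. \<bar>lab v\<bar>) (\<tau> - {u})"
    using assms(1) unfolding alternating_def by (meson inj_on_diff)
next
  fix a b assume a: "a \<in> \<tau> - {u}" and b: "b \<in> \<tau> - {u}"
    and h: "\<bar>lab a\<bar> < \<bar>lab b\<bar> \<and> \<not> (\<exists>x\<in>\<tau> - {u}. \<bar>lab a\<bar> < \<bar>lab x\<bar> \<and> \<bar>lab x\<bar> < \<bar>lab b\<bar>)"
  have "\<bar>lab b\<bar> \<le> \<bar>lab u\<bar>" using assms(2) b by blast
  then have "\<not> (\<exists>x\<in>\<tau>. \<bar>lab a\<bar> < \<bar>lab x\<bar> \<and> \<bar>lab x\<bar> < \<bar>lab b\<bar>)"
    using h by auto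
  then show "sgn (lab a) \<noteq> sgn (lab b)"
    using assms(1) a b h unfolding alternating_def by blast
qed

lemma alternating_insert_above_max:
  assumes "alternating lab \<tau>" "t \<in> \<tau>" "\<forall>x\<in>\<tau>. \<bar>lab x\<bar> \<le> \<bar>lab t\<bar>"
    and "\<bar>lab t\<bar> < \<bar>lab w\<bar>" "sgn (lab t) \<noteq> sgn (lab w)"
  shows "alternating lab (insert w \<tau>)"
proof -
  have w_notin: "w \<notin> \<tau>" using assms(3,4) by force
  have inj: "inj_on (\<lambda>v. \<bar>lab v\<bar>) (insert w \<tau>)"
  proof -
    have "inj_on (\<lambda>v. \<bar>lab v\<bar>) \<tau>" using assms(1) unfolding alternating_def by blast
    moreover have "\<bar>lab w\<bar> \<notin> (\<lambda>v. \<bar>lab v\<bar>) ` \<tau>" using assms(3,4) by force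
    ultimately show ?thesis using w_notin by simp
  qed
  show ?thesis
    unfolding alternating_def
  proof (intro conjI inj ballI impI)
    fix u v assume u: "u \<in> insert w \<tau>" and v: "v \<in> insert w \<tau>"
      and h: "\<bar>lab u\<bar> < \<bar>lab v\<bar> \<and> \<not> (\<exists>x\<in>insert w \<tau>. \<bar>lab u\<bar> < \<bar>lab x\<bar> \<and> \<bar>lab x\<bar> < \<bar>lab v\<bar>)"
    show "sgn (lab u) \<noteq> sgn (lab v)"
    proof (cases "v = w")
      case True
      then have "u \<in> \<tau>" using u h by auto
      have "\<bar>lab t\<bar> \<le> \<bar>lab u\<bar>"
      proof (rule ccontr)
        assume "\<not> \<bar>lab t\<bar> \<le> \<bar>lab u\<bar>"
        then show False using h assms(2,4) True by auto
      qed
      then have "\<bar>lab u\<bar> = \<bar>lab t\<bar>" using assms(3) \<open>u \<in> \<tau>\<close> by force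
      then have "u = t" using inj assms(2) \<open>u \<in> \<tau>\<close> by (auto dest: inj_onD)
      then show ?thesis using True assms(5) by simp
    next
      case False
      then have "v \<in> \<tau>" using v by auto
      then have "u \<in> \<tau>" using u h assms(3,4) by force
      then show ?thesis using h \<open>v \<in> \<tau>\<close> assms(1) unfolding alternating_def by blast
    qed
  qed
qed

lemma alternating_subset_of_card:
  assumes "finite \<tau>" "alternating lab \<tau>" "k \<le> card \<tau>"
  shows "\<exists>\<tau>'\<subseteq>\<tau>. card \<tau>' = k \<and> alternating lab \<tau>'"
  using assms
proof (induction "card \<tau>" arbitrary: \<tau> rule: less_induct)
  case less
  show ?case
  proof (cases "k = card \<tau>")
    case True then show ?thesis using less by blast
  next
    case False
    then have "\<tau> \<noteq> {}" using less by auto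
    with less(2) obtain u where u: "u \<in> \<tau>" "\<forall>x\<in>\<tau>. \<bar>lab x\<bar> \<le> \<bar>lab u\<bar>"
      by (rule finite_obtain_max)
    have "card (\<tau> - {u}) < card \<tau>" using u(1) less(2) by (simp add: card_gt_0_iff \<open>\<tau> \<noteq> {}\<close>)
    moreover have "k \<le> card (\<tau> - {u})" using False less(2,4) u(1) by auto
    ultimately obtain \<tau>' where "\<tau>' \<subseteq> \<tau> - {u}" "card \<tau>' = k" "alternating lab \<tau>'"
      using less(1) alternating_Diff_max[OF less(3) u(2)] less(2) by blast
    then show ?thesis by blast
  qed
qed

subsection \<open>Polynomials with a prescribed sign pattern\<close>

text \<open>The clauses about the top \<open>t\<close> of \<open>\<tau>\<close> are what makes a certificate extendable.\<close>
definition sign_certificate :: "('v \<Rightarrow> int) \<Rightarrow> 'v set \<Rightarrow> real poly \<Rightarrow> 'v set \<Rightarrow> 'v \<Rightarrow> bool" where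
  "sign_certificate lab S P \<tau> t \<longleftrightarrow> \<tau> \<subseteq> S \<and> t \<in> \<tau> \<and> alternating lab \<tau> \<and> degree P < card \<tau> \<and>
     (\<forall>v\<in>S. \<bar>lab v\<bar> \<le> \<bar>lab t\<bar>) \<and>
     (\<forall>v\<in>S. of_int (sgn (lab v)) * poly P (of_int \<bar>lab v\<bar>) > 0) \<and>
     (\<forall>r. of_int \<bar>lab t\<bar> \<le> r \<longrightarrow> of_int (sgn (lab t)) * poly P r > 0)"

text \<open>The new factor is positive up to \<open>\<bar>lab t\<bar>\<close> and negative from \<open>\<bar>lab t\<bar> + 1\<close> on, where
  only the sign of \<open>lab w\<close>, opposite to that of \<open>lab t\<close>, occurs.\<close>
lemma sign_certificate_insert_top:
  fixes lab :: "'v \<Rightarrow> int"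
  assumes cert: "sign_certificate lab {v\<in>S. \<bar>lab v\<bar> \<le> \<bar>lab t\<bar>} P \<tau> t" and "finite S"
    and upper: "\<forall>v\<in>S. \<bar>lab t\<bar> < \<bar>lab v\<bar> \<longrightarrow> sgn (lab v) = sgn (lab w)"
    and w: "w \<in> S" "\<forall>v\<in>S. \<bar>lab v\<bar> \<le> \<bar>lab w\<bar>" "\<bar>lab t\<bar> < \<bar>lab w\<bar>"
      "sgn (lab w) = - sgn (lab t)" "sgn (lab w) \<noteq> 0"
  shows "sign_certificate lab S (P * [:of_int \<bar>lab t\<bar> + 1/2, -1:]) (insert w \<tau>) w"
proof -
  define Q where "Q = P * [:of_int \<bar>lab t\<bar> + 1/2, -1:]"
  have sub: "\<tau> \<subseteq> {v\<in>S. \<bar>lab v\<bar> \<le> \<bar>lab t\<bar>}" and "t \<in> \<tau>" and alt: "alternating lab \<tau>"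
    and deg: "degree P < card \<tau>"
    and lower: "\<forall>v\<in>{v\<in>S. \<bar>lab v\<bar> \<le> \<bar>lab t\<bar>}. of_int (sgn (lab v)) * poly P (of_int \<bar>lab v\<bar>) > 0"
    and tail: "\<forall>r. of_int \<bar>lab t\<bar> \<le> r \<longrightarrow> of_int (sgn (lab t)) * poly P r > 0"
    using cert unfolding sign_certificate_def by blast+
  have poly_Q: "poly Q r = poly P r * (of_int \<bar>lab t\<bar> + 1/2 - r)" for r
    unfolding Q_def by (simp add: algebra_simps)
  have top: "\<forall>v\<in>\<tau>. \<bar>lab v\<bar> \<le> \<bar>lab t\<bar>" using sub by blast
  have "w \<notin> \<tau>" using top w(3) by force
  have "finite \<tau>" using sub \<open>finite S\<close> by (simp add: finite_subset)
  have beyond: "of_int (sgn (lab w)) * poly Q r > 0" if r: "of_int \<bar>lab t\<bar> + 1 \<le> r" for r :: real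
  proof -
    have "of_int (sgn (lab t)) * poly P r > 0" using tail r by simp
    then have "of_int (sgn (lab w)) * poly P r < 0" using w(4) by simp
    moreover have "of_int \<bar>lab t\<bar> + 1/2 - r < 0" using r by linarith
    ultimately show ?thesis unfolding poly_Q mult.assoc[symmetric] by (rule mult_neg_neg)
  qed
  show ?thesis
    unfolding sign_certificate_def Q_def[symmetric]
  proof (intro conjI)
    show "insert w \<tau> \<subseteq> S" using sub w(1) by blast
    show "alternating lab (insert w \<tau>)"
      using alternating_insert_above_max[OF alt \<open>t \<in> \<tau>\<close> top w(3)] w(4,5) by auto
    have "P \<noteq> 0" using tail by (metis mult_zero_right order.refl poly_0 less_irrefl)
    then have "degree Q = degree P + 1" unfolding Q_def by (subst degree_mult_eq) auto
    then show "degree Q < card (insert w \<tau>)" using deg \<open>w \<notin> \<tau>\<close> \<open>finite \<tau>\<close> by simp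
    show "\<forall>v\<in>S. of_int (sgn (lab v)) * poly Q (of_int \<bar>lab v\<bar>) > 0"
    proof
      fix v assume v: "v \<in> S"
      show "of_int (sgn (lab v)) * poly Q (of_int \<bar>lab v\<bar>) > 0"
      proof (cases "\<bar>lab v\<bar> \<le> \<bar>lab t\<bar>")
        case True
        then have "of_int \<bar>lab t\<bar> + 1/2 - of_int \<bar>lab v\<bar> > (0::real)" by linarith
        with lower v True show ?thesis unfolding poly_Q mult.assoc[symmetric] by (simp add: mult_pos_pos)
      next
        case False
        then have "of_int \<bar>lab t\<bar> + 1 \<le> (of_int \<bar>lab v\<bar> :: real)" by linarith
        then show ?thesis using upper v False beyond by simp
      qed
    qed
    show "\<forall>r. of_int \<bar>lab w\<bar> \<le> r \<longrightarrow> of_int (sgn (lab w)) * poly Q r > 0"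
    proof (intro allI impI)
      fix r :: real assume "of_int \<bar>lab w\<bar> \<le> r"
      then have "of_int \<bar>lab t\<bar> + 1 \<le> r" using w(3) by linarith
      then show "of_int (sgn (lab w)) * poly Q r > 0" by (rule beyond)
    qed
  qed (use w in auto)
qed

lemma sign_certificate_same_sign:
  assumes w: "w \<in> S" "\<forall>v\<in>S. \<bar>lab v\<bar> \<le> \<bar>lab w\<bar>" and "lab w \<noteq> 0"
    and same_sign: "\<forall>v\<in>S. sgn (lab v) = sgn (lab w)"
  shows "sign_certificate lab S [:of_int (sgn (lab w)):] {w} w"
proof -
  let ?c = "of_int (sgn (lab w)) :: real"
  have "?c * ?c > 0" using \<open>lab w \<noteq> 0\<close> by (auto simp: sgn_if)
  show ?thesis
    unfolding sign_certificate_def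
  proof (intro conjI)
    show "alternating lab {w}" unfolding alternating_def by simp
    show "\<forall>v\<in>S. of_int (sgn (lab v)) * poly [:?c:] (of_int \<bar>lab v\<bar>) > 0"
      using same_sign \<open>?c * ?c > 0\<close> by simp
    show "\<forall>r. of_int \<bar>lab w\<bar> \<le> r \<longrightarrow> ?c * poly [:?c:] r > 0"
      using \<open>?c * ?c > 0\<close> by simp
  qed (use w in auto)
qed

text \<open>Let \<open>w\<close> be a top of \<open>S\<close> and \<open>t\<close> a top among the values of sign opposite to \<open>lab w\<close>.
  A certificate for the values up to \<open>\<bar>lab t\<bar>\<close> extends to \<open>S\<close>, since above \<open>\<bar>lab t\<bar>\<close> all signs
  agree with that of \<open>lab w\<close>.\<close>
lemma sign_certificate_exists:
  fixes lab :: "'v \<Rightarrow> int"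
  assumes "finite S" "S \<noteq> {}" "\<forall>v\<in>S. lab v \<noteq> 0"
    and "\<forall>u\<in>S. \<forall>w\<in>S. \<bar>lab u\<bar> = \<bar>lab w\<bar> \<longrightarrow> lab u = lab w"
  shows "\<exists>P \<tau> t. sign_certificate lab S P \<tau> t"
  using assms
proof (induction "card S" arbitrary: S rule: less_induct)
  case less
  obtain w where w: "w \<in> S" "\<forall>v\<in>S. \<bar>lab v\<bar> \<le> \<bar>lab w\<bar>"
    by (rule finite_obtain_max[OF less(2,3)])
  have sgn_w: "sgn (lab w) = 1 \<or> sgn (lab w) = -1" using less(4) w(1) by (auto simp: sgn_if)
  define Opp where "Opp = {v\<in>S. sgn (lab v) \<noteq> sgn (lab w)}"
  show ?case
  proof (cases "Opp = {}")
    case True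
    then have "\<forall>v\<in>S. sgn (lab v) = sgn (lab w)" unfolding Opp_def by blast
    with sign_certificate_same_sign[OF w] less(4) w(1) show ?thesis by blast
  next
    case False
    have "finite Opp" using less(2) unfolding Opp_def by simp
    then obtain t where t: "t \<in> Opp" "\<forall>v\<in>Opp. \<bar>lab v\<bar> \<le> \<bar>lab t\<bar>"
      using False by (rule finite_obtain_max)
    have "lab t \<noteq> lab w" using t(1) unfolding Opp_def by auto
    then have "\<bar>lab t\<bar> \<noteq> \<bar>lab w\<bar>" using less(5) w(1) t(1) unfolding Opp_def by blast
    then have t_lt_w: "\<bar>lab t\<bar> < \<bar>lab w\<bar>" using w(2) t(1) unfolding Opp_def by force
    define S' where "S' = {v\<in>S. \<bar>lab v\<bar> \<le> \<bar>lab t\<bar>}"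
    have S'_sub: "S' \<subseteq> S" "finite S'" using less(2) unfolding S'_def by auto
    have "w \<notin> S'" using t_lt_w unfolding S'_def by simp
    then have card_lt: "card S' < card S" using w(1) S'_sub less(2) by (metis psubsetI psubset_card_mono)
    have "t \<in> S'" using t(1) unfolding S'_def Opp_def by auto
    then have "S' \<noteq> {}" by blast
    moreover have "\<forall>v\<in>S'. lab v \<noteq> 0" using less(4) S'_sub(1) by blast
    moreover have "\<forall>u\<in>S'. \<forall>v\<in>S'. \<bar>lab u\<bar> = \<bar>lab v\<bar> \<longrightarrow> lab u = lab v"
      using less(5) S'_sub(1) by blast
    ultimately obtain P \<tau> t' where cert: "sign_certificate lab S' P \<tau> t'"
      using less(1)[OF card_lt S'_sub(2)] by blast
    then have "t' \<in> S'" "\<forall>v\<in>S'. \<bar>lab v\<bar> \<le> \<bar>lab t'\<bar>" unfolding sign_certificate_def by blast+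
    then have "\<bar>lab t'\<bar> = \<bar>lab t\<bar>" using \<open>t \<in> S'\<close> unfolding S'_def by fastforce
    then have t'_eq: "lab t' = lab t"
      using less(5) \<open>t' \<in> S'\<close> t(1) S'_sub(1) unfolding Opp_def by blast
    have "S' = {v\<in>S. \<bar>lab v\<bar> \<le> \<bar>lab t'\<bar>}" using t'_eq unfolding S'_def by simp
    with cert have cert': "sign_certificate lab {v\<in>S. \<bar>lab v\<bar> \<le> \<bar>lab t'\<bar>} P \<tau> t'" by simp
    have upper: "\<forall>v\<in>S. \<bar>lab t'\<bar> < \<bar>lab v\<bar> \<longrightarrow> sgn (lab v) = sgn (lab w)"
      using t(2) t'_eq unfolding Opp_def by fastforce
    have "\<bar>lab t'\<bar> < \<bar>lab w\<bar>" "sgn (lab w) = - sgn (lab t')" "sgn (lab w) \<noteq> 0"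
      using t_lt_w t'_eq t(1) sgn_w less(4) unfolding Opp_def by (auto simp: sgn_if split: if_splits)
    with sign_certificate_insert_top[OF cert' less(2) upper w] show ?thesis by blast
  qed
qed

lemma sign_polynomial_of_short_alternating:
  fixes lab :: "'v \<Rightarrow> int"
  assumes "finite S" "S \<noteq> {}" "\<forall>v\<in>S. lab v \<noteq> 0"
    and "\<forall>u\<in>S. \<forall>w\<in>S. \<bar>lab u\<bar> = \<bar>lab w\<bar> \<longrightarrow> lab u = lab w"
    and "\<nexists>\<tau>. \<tau> \<subseteq> S \<and> card \<tau> = d + 1 \<and> alternating lab \<tau>"
  shows "\<exists>P::real poly. degree P < d \<and> (\<forall>v\<in>S. of_int (sgn (lab v)) * poly P (of_int \<bar>lab v\<bar>) > 0)"
proof -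
  obtain P :: "real poly" and \<tau> where \<tau>: "\<tau> \<subseteq> S" "alternating lab \<tau>" "degree P < card \<tau>"
    and pos: "\<forall>v\<in>S. of_int (sgn (lab v)) * poly P (of_int \<bar>lab v\<bar>) > 0"
    using sign_certificate_exists[OF assms(1-4)] unfolding sign_certificate_def by blast
  have "card \<tau> \<le> d"
  proof (rule ccontr)
    assume "\<not> card \<tau> \<le> d"
    then obtain \<tau>' where "\<tau>' \<subseteq> \<tau>" "card \<tau>' = d + 1" "alternating lab \<tau>'"
      using alternating_subset_of_card[OF finite_subset[OF \<tau>(1) assms(1)] \<tau>(2), of "d + 1"] by auto
    then show False using assms(5) \<tau>(1) by blast
  qed
  then show ?thesis using \<tau>(3) pos by (intro exI[of _ P]) simp
qed

subsection \<open>Signed moments of a point of the realization\<close>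

lemma fan_labeling_eq_if_abs_eq:
  assumes "simplicial_complex K" "fan_labeling K \<nu> lab" "\<sigma> \<in> K" "u \<in> \<sigma>" "w \<in> \<sigma>"
    and "\<bar>lab u\<bar> = \<bar>lab w\<bar>"
  shows "lab u = lab w"
proof (cases "u = w")
  case False
  have "{u, w} \<subseteq> \<sigma>" "{u, w} \<noteq> {}" using assms(4,5) by auto
  then have "{u, w} \<in> K" using assms(1,3) unfolding simplicial_complex_def by blast
  then have "lab u + lab w \<noteq> 0" using assms(2) False unfolding fan_labeling_def by blast
  then show ?thesis using assms(6) by linarith
qed simp

definition signed_moment :: "'v set \<Rightarrow> ('v \<Rightarrow> int) \<Rightarrow> nat \<Rightarrow> ('v \<Rightarrow> real) \<Rightarrow> real" where
  "signed_moment V lab p x = (\<Sum>v\<in>V. x v * (of_int (sgn (lab v)) * of_int \<bar>lab v\<bar> ^ p))"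

lemma continuous_on_signed_moment: "continuous_on X (signed_moment V lab p)"
proof -
  have "continuous_on X (\<lambda>x. x v)" for v
    by (rule continuous_on_subset[OF continuous_on_product_coordinates]) simp
  then show ?thesis unfolding signed_moment_def by (intro continuous_intros)
qed

lemma signed_moment_compose_odd:
  assumes "bij_betw \<nu> V V" "\<forall>v\<in>V. lab (\<nu> v) = - lab v"
  shows "signed_moment V lab p (x \<circ> \<nu>) = - signed_moment V lab p x"
proof -
  let ?c = "\<lambda>v. of_int (sgn (lab v)) * of_int \<bar>lab v\<bar> ^ p :: real"
  have "signed_moment V lab p (x \<circ> \<nu>) = (\<Sum>v\<in>V. x (\<nu> v) * - ?c (\<nu> v))"
    unfolding signed_moment_def using assms(2) by (intro sum.cong) (simp_all add: sgn_minus)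
  also have "\<dots> = (\<Sum>v\<in>V. x v * - ?c v)"
    using sum.reindex_bij_betw[OF assms(1), of "\<lambda>v. x v * - ?c v"] by simp
  also have "\<dots> = - signed_moment V lab p x"
    unfolding signed_moment_def by (simp add: sum_negf)
  finally show ?thesis .
qed

text \<open>Pairing \<open>x\<close> with the sign polynomial of its support gives a positive combination of
  the moments of order \<open>< d\<close>.\<close>
lemma signed_moment_nonzero:
  assumes K: "simplicial_complex K" and lab: "fan_labeling K \<nu> lab" and x: "x \<in> geom_real K"
    and no_alt: "\<nexists>\<tau>. \<tau> \<subseteq> {v. x v \<noteq> 0} \<and> card \<tau> = d + 1 \<and> alternating lab \<tau>"
  shows "\<exists>p<d. signed_moment (vertices K) lab p x \<noteq> 0"
proof -
  define \<sigma> where "\<sigma> = {v. x v \<noteq> 0}"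
  have x_nonneg: "\<forall>v. 0 \<le> x v" and "\<sigma> \<in> K" using x unfolding geom_real_def \<sigma>_def by auto
  then have \<sigma>: "finite \<sigma>" "\<sigma> \<noteq> {}" "\<sigma> \<subseteq> vertices K"
    using K unfolding simplicial_complex_def vertices_def by auto
  have "\<forall>v\<in>\<sigma>. lab v \<noteq> 0" using lab \<sigma>(3) unfolding fan_labeling_def by blast
  moreover have "\<forall>u\<in>\<sigma>. \<forall>w\<in>\<sigma>. \<bar>lab u\<bar> = \<bar>lab w\<bar> \<longrightarrow> lab u = lab w"
    using fan_labeling_eq_if_abs_eq[OF K lab \<open>\<sigma> \<in> K\<close>] by blast
  ultimately obtain P :: "real poly" where deg: "degree P < d"
    and pos: "\<forall>v\<in>\<sigma>. of_int (sgn (lab v)) * poly P (of_int \<bar>lab v\<bar>) > 0"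
    using sign_polynomial_of_short_alternating[OF \<sigma>(1,2)] no_alt unfolding \<sigma>_def by blast
  let ?c = "\<lambda>p v. of_int (sgn (lab v)) * of_int \<bar>lab v\<bar> ^ p :: real"
  have "0 < (\<Sum>v\<in>\<sigma>. x v * (of_int (sgn (lab v)) * poly P (of_int \<bar>lab v\<bar>)))"
  proof (rule sum_pos[OF \<sigma>(1,2)])
    fix v assume "v \<in> \<sigma>"
    then have "x v > 0" using x_nonneg unfolding \<sigma>_def by (simp add: order_less_le)
    with pos \<open>v \<in> \<sigma>\<close> show "0 < x v * (of_int (sgn (lab v)) * poly P (of_int \<bar>lab v\<bar>))" by simp
  qed
  also have "\<dots> = (\<Sum>v\<in>vertices K. x v * (of_int (sgn (lab v)) * poly P (of_int \<bar>lab v\<bar>)))"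
    using K \<sigma>(3) unfolding simplicial_complex_def vertices_def
    by (intro sum.mono_neutral_left) (auto simp: \<sigma>_def)
  also have "\<dots> = (\<Sum>v\<in>vertices K. \<Sum>p\<le>degree P. coeff P p * (x v * ?c p v))"
    unfolding poly_altdef by (intro sum.cong refl) (simp add: sum_distrib_left algebra_simps)
  also have "\<dots> = (\<Sum>p\<le>degree P. coeff P p * signed_moment (vertices K) lab p x)"
    unfolding signed_moment_def by (subst sum.swap) (simp add: sum_distrib_left)
  finally obtain p where "p \<le> degree P" "signed_moment (vertices K) lab p x \<noteq> 0"
    by (metis (no_types, lifting) less_irrefl mult_zero_right sum.neutral atMost_iff)
  then show ?thesis using deg by (intro exI[of _ p]) auto
qed

subsection \<open>Odd maps to spheres and the index\<close>

lemma odd_map_to_sphere: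
  fixes F :: "'q \<Rightarrow> 'a::topological_space \<Rightarrow> real"
  assumes "finite Q" and cont: "\<And>q. q \<in> Q \<Longrightarrow> continuous_on X (F q)"
    and nonzero: "\<And>x. x \<in> X \<Longrightarrow> \<exists>q\<in>Q. F q x \<noteq> 0"
    and odd: "\<And>q x. q \<in> Q \<Longrightarrow> x \<in> X \<Longrightarrow> F q (\<tau> x) = - F q x"
  shows "\<exists>g. continuous_on X g \<and> g ` X \<subseteq> sphere_d (int (card Q) - 1) \<and>
    (\<forall>x\<in>X. g (\<tau> x) = - g x)"
proof -
  define k where "k = card Q"
  obtain h where h: "bij_betw h {..<k} Q"
    using ex_bij_betw_nat_finite[OF assms(1)] unfolding k_def atLeast0LessThan by blast
  have hQ: "h j \<in> Q" if "j < k" for j using h that unfolding bij_betw_def by auto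
  define N where "N x = sqrt (\<Sum>j<k. (F (h j) x)\<^sup>2)" for x
  define g where "g x = (\<lambda>j. if j < k then F (h j) x / N x else 0)" for x
  have N_pos: "N x > 0" if x: "x \<in> X" for x
  proof -
    obtain q where "q \<in> Q" "F q x \<noteq> 0" using nonzero[OF x] by blast
    then have "(\<Sum>q\<in>Q. (F q x)\<^sup>2) > 0" by (intro sum_pos2[OF assms(1)]) auto
    then show ?thesis unfolding N_def using sum.reindex_bij_betw[OF h, of "\<lambda>q. (F q x)\<^sup>2"] by simp
  qed
  have "continuous_on X N" unfolding N_def by (auto intro!: continuous_intros cont hQ)
  then have "continuous_on X (\<lambda>x. F (h j) x / N x)" if "j < k" for j
    using N_pos by (intro continuous_on_divide cont hQ that) (simp_all add: order_less_imp_not_eq2)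
  then have "continuous_on X (\<lambda>x. g x j)" for j
    by (cases "j < k") (simp_all add: g_def)
  then have "continuous_on X g" by (rule continuous_on_coordinatewise_then_product)
  moreover have "g x \<in> sphere_d (int k - 1)" if x: "x \<in> X" for x
  proof -
    have coords: "{i. int i \<le> int k - 1} = {..<k}" by auto
    have "(\<Sum>j<k. (F (h j) x)\<^sup>2) = (N x)\<^sup>2" unfolding N_def by (simp add: sum_nonneg)
    then have "(\<Sum>j<k. (g x j)\<^sup>2) = 1"
      using N_pos[OF x] unfolding g_def by (simp add: power_divide flip: sum_divide_distrib)
    then show ?thesis unfolding sphere_d_def coords by (simp add: g_def)
  qed
  moreover have "g (\<tau> x) = - g x" if x: "x \<in> X" for x
  proof -
    have "N (\<tau> x) = N x" using odd[OF hQ x] unfolding N_def by simp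
    then show ?thesis using odd[OF hQ x] unfolding g_def by (simp add: fun_eq_iff)
  qed
  ultimately show ?thesis unfolding k_def by blast
qed

lemma Least_int_le:
  fixes P :: "int \<Rightarrow> bool"
  assumes "P d" and bounded: "\<And>e. P e \<Longrightarrow> b \<le> e"
  shows "(LEAST e. P e) \<le> d"
proof -
  define D where "D = {e. P e \<and> e \<le> d}"
  have "finite D" unfolding D_def
    by (rule finite_subset[of _ "{b..d}"]) (auto dest: bounded)
  moreover have "d \<in> D" using assms(1) unfolding D_def by auto
  ultimately have min: "Min D \<in> D" "\<forall>e\<in>D. Min D \<le> e" by (auto intro: Min_in)
  have "(LEAST e. P e) = Min D"
  proof (rule Least_equality)
    show "P (Min D)" using min(1) unfolding D_def by auto
    show "Min D \<le> e" if "P e" for e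
      using min that unfolding D_def by (cases "e \<le> d") auto
  qed
  then show ?thesis using min(1) unfolding D_def by auto
qed

lemma Z2_index_le:
  fixes g :: "('v \<Rightarrow> real) \<Rightarrow> nat \<Rightarrow> real"
  assumes "-1 \<le> d" "continuous_on (geom_real K) g" "g ` geom_real K \<subseteq> sphere_d d"
    and "\<forall>x\<in>geom_real K. g (x \<circ> \<nu>) = - g x"
  shows "Z2_index K \<nu> \<le> d"
  unfolding Z2_index_def using assms by (intro Least_int_le[where b = "-1"]) blast+

lemma free_Z2_complex_bij_betw:
  assumes "free_Z2_complex K \<nu>"
  shows "bij_betw \<nu> (vertices K) (vertices K)"
proof -
  have inv: "\<forall>v\<in>vertices K. \<nu> v \<in> vertices K \<and> \<nu> (\<nu> v) = v"
    using assms unfolding free_Z2_complex_def by blast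
  then show ?thesis by (intro bij_betw_byWitness[where f' = \<nu>]) auto
qed


theorem theorem3p1:
  fixes K :: "'v set set" and \<nu> :: "'v \<Rightarrow> 'v"
    and lab :: "nat \<Rightarrow> 'v \<Rightarrow> int" and d :: "nat \<Rightarrow> nat" and m :: nat
  assumes "free_Z2_complex K \<nu>"
    and "\<forall>i\<in>{1..m}. fan_labeling K \<nu> (lab i)"
    and "(\<Sum>i\<in>{1..m}. int (d i)) = Z2_index K \<nu>"
  shows "\<exists>\<sigma>\<in>K. \<forall>i\<in>{1..m}. \<exists>\<tau>. \<tau> \<subseteq> \<sigma> \<and> card \<tau> = d i + 1 \<and> alternating (lab i) \<tau>"
proof (rule ccontr)
  assume no_simplex: "\<not> ?thesis"
  define Q where "Q = Sigma {1..m} (\<lambda>i. {..<d i})"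
  define F where "F q = signed_moment (vertices K) (lab (fst q)) (snd q)" for q
  have K: "simplicial_complex K" using assms(1) unfolding free_Z2_complex_def by blast
  have nonzero: "\<exists>q\<in>Q. F q x \<noteq> 0" if x: "x \<in> geom_real K" for x
  proof -
    have "{v. x v \<noteq> 0} \<in> K" using x unfolding geom_real_def by blast
    then obtain i where i: "i \<in> {1..m}"
      and "\<nexists>\<tau>. \<tau> \<subseteq> {v. x v \<noteq> 0} \<and> card \<tau> = d i + 1 \<and> alternating (lab i) \<tau>"
      using no_simplex by blast
    moreover have "fan_labeling K \<nu> (lab i)" using assms(2) i by blast
    ultimately obtain p where "p < d i" "signed_moment (vertices K) (lab i) p x \<noteq> 0"
      using signed_moment_nonzero[OF K _ x] by blast
    then show ?thesis using i unfolding Q_def F_def by (intro bexI[of _ "(i, p)"]) auto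
  qed
  have odd: "F q (x \<circ> \<nu>) = - F q x" if "q \<in> Q" for q x
  proof -
    have "\<forall>v\<in>vertices K. lab (fst q) (\<nu> v) = - lab (fst q) v"
      using assms(2) that unfolding Q_def fan_labeling_def by (auto simp: add_eq_0_iff)
    then show ?thesis
      unfolding F_def by (rule signed_moment_compose_odd[OF free_Z2_complex_bij_betw[OF assms(1)]])
  qed
  have "finite Q" unfolding Q_def by simp
  then obtain g where "continuous_on (geom_real K) g"
    "g ` geom_real K \<subseteq> sphere_d (int (card Q) - 1)" "\<forall>x\<in>geom_real K. g (x \<circ> \<nu>) = - g x"
    using odd_map_to_sphere[of Q "geom_real K" F "\<lambda>x. x \<circ> \<nu>"] nonzero odd
    unfolding F_def by (auto simp: continuous_on_signed_moment)
  then have "Z2_index K \<nu> \<le> int (card Q) - 1" by (intro Z2_index_le) auto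
  moreover have "int (card Q) = Z2_index K \<nu>"
    using assms(3) unfolding Q_def by (simp add: card_SigmaI)
  ultimately show False by simp
qed

end
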